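(* Let $(X,d)$ be a geodesic metric space whose metric is convex, and let $(A,B)$ be a pair of compact convex subsets of $X$. Then $(A,B)$ has proximal normal structure.
   Context: A geodesic space is one in which any two points are joined by a geodesic segment; a subset is convex if it contains every geodesic segment joining two of its points. For $t\in[0,1]$, $(1-t)y+tz$ denotes a point on a geodesic segment from $y$ to $z$ at distance $t\,d(y,z)$ from $y$. The metric is convex if $d(x,(1-t)y+tz)\le(1-t)d(x,y)+t\,d(x,z)$ for all $x,y,z\in X$, $t\in[0,1]$ (and all such points). Notation: $\operatorname{dist}(A,B)=\inf\{d(x,y):x\in A,y\in B\}$, $\delta(x,A)=\sup\{d(x,y):y\in A\}$, $\delta(A,B)=\sup\{d(x,y):x\in A,y\in B\}$. A pair $(H_1,H_2)$ is proximal if for every $(a,b)\in H_1\times H_2$ there is $(a',b')\in H_1\times H_2$ with $d(a,b')=d(a',b)=\operatorname{dist}(H_1,H_2)$. A convex pair $(K_1,K_2)$ has proximal normal structure if for every closed bounded convex proximal pair $(H_1,H_2)$ with $H_1\subseteq K_1$, $H_2\subseteq K_2$, $\operatorname{dist}(H_1,H_2)=\operatorname{dist}(K_1,K_2)$ and $\delta(H_1,H_2)>\operatorname{dist}(H_1,H_2)$, there exists $(x_1,x_2)\in H_1\times H_2$ with $\delta(x_1,H_2)<\delta(H_1,H_2)$ and $\delta(x_2,H_1)<\delta(H_1,H_2)$. *)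

theory Defs
  imports "HOL-Analysis.Analysis"
begin

definition geodesic_segment :: "'a::metric_space \<Rightarrow> 'a \<Rightarrow> 'a set \<Rightarrow> bool" where
  "geodesic_segment x y S \<longleftrightarrow>
     (\<exists>g::real \<Rightarrow> 'a. g 0 = x \<and> g (dist x y) = y \<and>
        (\<forall>s\<in>{0..dist x y}. \<forall>t\<in>{0..dist x y}. dist (g s) (g t) = \<bar>s - t\<bar>) \<and>
        S = g ` {0..dist x y})"

definition geodesic_space :: "'a::metric_space itself \<Rightarrow> bool" where
  "geodesic_space _ \<longleftrightarrow> (\<forall>x y::'a. \<exists>S. geodesic_segment x y S)"

definition geo_convex :: "'a::metric_space set \<Rightarrow> bool" where
  "geo_convex A \<longleftrightarrow> (\<forall>y\<in>A. \<forall>z\<in>A. \<forall>S. geodesic_segment y z S \<longrightarrow> S \<subseteq> A)"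

definition convex_metric :: "'a::metric_space itself \<Rightarrow> bool" where
  "convex_metric _ \<longleftrightarrow>
     (\<forall>x y z::'a. \<forall>t::real. \<forall>S p. t \<in> {0..1} \<and> geodesic_segment y z S \<and> p \<in> S \<and>
        dist y p = t * dist y z \<longrightarrow> dist x p \<le> (1 - t) * dist x y + t * dist x z)"

definition delta_pt :: "'a::metric_space \<Rightarrow> 'a set \<Rightarrow> real" where
  "delta_pt x A = Sup {dist x y | y. y \<in> A}"

definition delta_sets :: "'a::metric_space set \<Rightarrow> 'a set \<Rightarrow> real" where
  "delta_sets A B = Sup {dist x y | x y. x \<in> A \<and> y \<in> B}"

definition proximal_pair :: "'a::metric_space set \<Rightarrow> 'a set \<Rightarrow> bool" where
  "proximal_pair H1 H2 \<longleftrightarrow>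
     (\<forall>a\<in>H1. \<forall>b\<in>H2. \<exists>a'\<in>H1. \<exists>b'\<in>H2.
        dist a b' = setdist H1 H2 \<and> dist a' b = setdist H1 H2)"

definition proximal_normal_structure :: "'a::metric_space set \<Rightarrow> 'a set \<Rightarrow> bool" where
  "proximal_normal_structure K1 K2 \<longleftrightarrow>
     (\<forall>H1 H2. H1 \<noteq> {} \<and> H2 \<noteq> {} \<and> closed H1 \<and> closed H2 \<and> bounded H1 \<and> bounded H2 \<and>
        geo_convex H1 \<and> geo_convex H2 \<and> proximal_pair H1 H2 \<and> H1 \<subseteq> K1 \<and> H2 \<subseteq> K2 \<and>
        setdist H1 H2 = setdist K1 K2 \<and> delta_sets H1 H2 > setdist H1 H2 \<longrightarrow>
        (\<exists>x1\<in>H1. \<exists>x2\<in>H2. delta_pt x1 H2 < delta_sets H1 H2 \<and> delta_pt x2 H1 < delta_sets H1 H2))"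

end

theory Submission
  imports Defs
begin

text \<open>Let \<open>D = \<delta>(H\<^sub>1, H\<^sub>2)\<close> and suppose every \<open>x \<in> H\<^sub>1\<close> has a point of \<open>H\<^sub>2\<close> at distance \<open>D\<close>.
  By convexity of the metric, a point of \<open>H\<^sub>2\<close> at distance \<open>D\<close> from a midpoint of \<open>c, x \<in> H\<^sub>1\<close> is at
  distance \<open>D\<close> from both \<open>c\<close> and \<open>x\<close>. Hence the closed sets \<open>{y \<in> H\<^sub>2. d(x, y) \<ge> D}\<close>, \<open>x \<in> H\<^sub>1\<close>,
  have the finite intersection property, and compactness of \<open>H\<^sub>2\<close> yields a \<open>y \<in> H\<^sub>2\<close> at distance \<open>D\<close>
  from all of \<open>H\<^sub>1\<close>. Proximality gives a point of \<open>H\<^sub>1\<close> at distance \<open>dist(H\<^sub>1, H\<^sub>2) < D\<close> from \<open>y\<close>,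
  a contradiction. The roles of \<open>H\<^sub>1\<close> and \<open>H\<^sub>2\<close> are symmetric.\<close>

lemma geo_convex_midpoint_dist_le:
  fixes c x :: "'a::metric_space"
  assumes geo: "geodesic_space TYPE('a)" and cm: "convex_metric TYPE('a)"
    and "geo_convex H" and "c \<in> H" and "x \<in> H"
  shows "\<exists>p\<in>H. \<forall>y. dist y p \<le> (dist y c + dist y x) / 2"
proof -
  obtain S where S: "geodesic_segment c x S"
    using geo unfolding geodesic_space_def by blast
  then obtain g where g0: "g 0 = c"
    and iso: "\<forall>s\<in>{0..dist c x}. \<forall>t\<in>{0..dist c x}. dist (g s) (g t) = \<bar>s - t\<bar>"
    and S_eq: "S = g ` {0..dist c x}"
    unfolding geodesic_segment_def by blast
  define p where "p = g (dist c x / 2)"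
  have pS: "p \<in> S"
    unfolding p_def S_eq by auto
  moreover have "S \<subseteq> H"
    using assms(3-5) S unfolding geo_convex_def by blast
  moreover have "dist c p = (1/2) * dist c x"
    using iso[rule_format, of 0 "dist c x / 2"] g0 unfolding p_def by auto
  then have "dist y p \<le> (1 - 1/2) * dist y c + (1/2) * dist y x" for y
    using cm pS S unfolding convex_metric_def
    by (elim allE[of _ y] allE[of _ c] allE[of _ x] allE[of _ "1/2"] allE[of _ S] allE[of _ p]) auto
  ultimately show ?thesis
    by (auto simp: field_simps)
qed

lemma geo_convex_midpoint_far_points:
  fixes c x :: "'a::metric_space"
  assumes "geodesic_space TYPE('a)" and "convex_metric TYPE('a)"
    and "geo_convex H" and "c \<in> H" and "x \<in> H"
    and c_le: "\<forall>y\<in>K. dist c y \<le> D" and x_le: "\<forall>y\<in>K. dist x y \<le> D"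
  shows "\<exists>p\<in>H. \<forall>y\<in>K. D \<le> dist p y \<longrightarrow> D \<le> dist c y \<and> D \<le> dist x y"
proof -
  obtain p where "p \<in> H" and p: "\<forall>y. dist y p \<le> (dist y c + dist y x) / 2"
    using geo_convex_midpoint_dist_le[OF assms(1-5)] by blast
  have "D \<le> dist c y \<and> D \<le> dist x y" if "y \<in> K" "D \<le> dist p y" for y
    using p[rule_format, of y] c_le x_le that by (auto simp: dist_commute)
  with \<open>p \<in> H\<close> show ?thesis
    by blast
qed

lemma geo_convex_far_points_finite_Inter:
  fixes H :: "'a::metric_space set"
  assumes "geodesic_space TYPE('a)" and "convex_metric TYPE('a)"
    and "geo_convex H" and "H \<noteq> {}" and le_D: "\<forall>x\<in>H. \<forall>y\<in>K. dist x y \<le> D"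
    and "finite F" and "F \<subseteq> H"
  shows "\<exists>c\<in>H. \<forall>y\<in>K. D \<le> dist c y \<longrightarrow> (\<forall>x\<in>F. D \<le> dist x y)"
  using \<open>finite F\<close> \<open>F \<subseteq> H\<close>
proof (induction F rule: finite_induct)
  case empty
  then show ?case
    using \<open>H \<noteq> {}\<close> by blast
next
  case (insert x F)
  then obtain c where "c \<in> H" and c: "\<forall>y\<in>K. D \<le> dist c y \<longrightarrow> (\<forall>z\<in>F. D \<le> dist z y)"
    by blast
  obtain p where "p \<in> H" and "\<forall>y\<in>K. D \<le> dist p y \<longrightarrow> D \<le> dist c y \<and> D \<le> dist x y"
    using geo_convex_midpoint_far_points[OF assms(1-3) \<open>c \<in> H\<close>, of x K D] insert.prems le_D \<open>c \<in> H\<close>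
    by blast
  with c show ?case
    by blast
qed

lemma geo_convex_common_far_point:
  fixes H :: "'a::metric_space set"
  assumes "geodesic_space TYPE('a)" and "convex_metric TYPE('a)"
    and "geo_convex H" and "H \<noteq> {}" and "compact K"
    and le_D: "\<forall>x\<in>H. \<forall>y\<in>K. dist x y \<le> D" and far: "\<forall>x\<in>H. \<exists>y\<in>K. D \<le> dist x y"
  shows "\<exists>y\<in>K. \<forall>x\<in>H. D \<le> dist x y"
proof -
  have "K \<inter> (\<Inter>x\<in>H. {y. D \<le> dist x y}) \<noteq> {}"
  proof (rule compact_imp_fip_image[OF \<open>compact K\<close>])
    show "closed {y. D \<le> dist x y}" for x :: 'a
      by (simp add: closed_Collect_le continuous_intros)
  next
    fix F assume "finite F" "F \<subseteq> H"
    then obtain c where "c \<in> H" and c: "\<forall>y\<in>K. D \<le> dist c y \<longrightarrow> (\<forall>x\<in>F. D \<le> dist x y)"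
      using geo_convex_far_points_finite_Inter[OF assms(1-4) le_D] by blast
    with far show "K \<inter> (\<Inter>x\<in>F. {y. D \<le> dist x y}) \<noteq> {}"
      by blast
  qed
  then show ?thesis
    by blast
qed

lemma delta_sets_commute: "delta_sets A B = delta_sets B A"
  unfolding delta_sets_def by (metis (no_types, opaque_lifting) dist_commute)

lemma dist_le_delta_sets:
  assumes "bounded A" and "bounded B" and "x \<in> A" and "y \<in> B"
  shows "dist x y \<le> delta_sets A B"
proof -
  obtain a e1 e2 where e1: "\<forall>u\<in>A. dist a u \<le> e1" and e2: "\<forall>v\<in>B. dist a v \<le> e2"
    using assms(1,2) bounded_any_center by metis
  have "dist u v \<le> e1 + e2" if "u \<in> A" "v \<in> B" for u v
    using dist_triangle3[of u v a] e1[rule_format, OF that(1)] e2[rule_format, OF that(2)]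
    by linarith
  then have "bdd_above {dist u v | u v. u \<in> A \<and> v \<in> B}"
    by (intro bdd_aboveI) blast
  with assms(3,4) show ?thesis
    unfolding delta_sets_def by (intro cSup_upper) blast+
qed

lemma delta_pt_attained:
  assumes "compact K" and "K \<noteq> {}"
  shows "\<exists>y\<in>K. delta_pt x K = dist x y"
proof -
  have "continuous_on K (dist x)"
    by (intro continuous_intros)
  then obtain y where "y \<in> K" and y: "\<forall>z\<in>K. dist x z \<le> dist x y"
    using continuous_attains_sup[OF assms] by blast
  then have "delta_pt x K = dist x y"
    unfolding delta_pt_def by (intro cSup_eq_maximum) auto
  with \<open>y \<in> K\<close> show ?thesis
    by blast
qed

lemma exists_delta_pt_less_delta_sets:
  fixes H1 H2 :: "'a::metric_space set"
  assumes "geodesic_space TYPE('a)" and "convex_metric TYPE('a)"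
    and "compact H1" and "compact H2" and "H1 \<noteq> {}" and "H2 \<noteq> {}" and "geo_convex H1"
    and near: "\<forall>b\<in>H2. \<exists>a\<in>H1. dist a b < delta_sets H1 H2"
  shows "\<exists>x\<in>H1. delta_pt x H2 < delta_sets H1 H2"
proof (rule ccontr)
  define D where "D = delta_sets H1 H2"
  assume "\<not> ?thesis"
  then have far: "\<forall>x\<in>H1. \<exists>y\<in>H2. D \<le> dist x y"
    using delta_pt_attained[OF \<open>compact H2\<close> \<open>H2 \<noteq> {}\<close>] unfolding D_def by (metis not_less)
  have "\<forall>x\<in>H1. \<forall>y\<in>H2. dist x y \<le> D"
    unfolding D_def using assms(3,4) by (simp add: compact_imp_bounded dist_le_delta_sets)
  then obtain y where "y \<in> H2" and "\<forall>x\<in>H1. D \<le> dist x y"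
    using geo_convex_common_far_point[OF assms(1,2,7,5,4)] far by blast
  with near show False
    unfolding D_def by fastforce
qed

theorem mainTheorem8:
  fixes A B :: "'a::metric_space set"
  assumes "geodesic_space TYPE('a)"
    and "convex_metric TYPE('a)"
    and "compact A" and "compact B"
    and "geo_convex A" and "geo_convex B"
  shows "proximal_normal_structure A B"
  unfolding proximal_normal_structure_def
proof (intro allI impI)
  fix H1 H2 :: "'a set"
  assume H: "H1 \<noteq> {} \<and> H2 \<noteq> {} \<and> closed H1 \<and> closed H2 \<and> bounded H1 \<and> bounded H2 \<and>
        geo_convex H1 \<and> geo_convex H2 \<and> proximal_pair H1 H2 \<and> H1 \<subseteq> A \<and> H2 \<subseteq> B \<and>
        setdist H1 H2 = setdist A B \<and> delta_sets H1 H2 > setdist H1 H2"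
  then have "compact H1" "compact H2"
    using assms(3,4) by (metis compact_Int_closed inf.absorb_iff2)+
  \<comment> \<open>proximality gives points at distance \<open>dist(H\<^sub>1, H\<^sub>2)\<close>, which is below the diameter\<close>
  have "\<forall>b\<in>H2. \<exists>a\<in>H1. dist a b < delta_sets H1 H2"
    "\<forall>a\<in>H1. \<exists>b\<in>H2. dist b a < delta_sets H2 H1"
    using H unfolding proximal_pair_def delta_sets_commute[of H2]
    by (metis all_not_in_conv dist_commute)+
  with H assms(1,2) \<open>compact H1\<close> \<open>compact H2\<close> show
    "\<exists>x1\<in>H1. \<exists>x2\<in>H2. delta_pt x1 H2 < delta_sets H1 H2 \<and> delta_pt x2 H1 < delta_sets H1 H2"
    using exists_delta_pt_less_delta_sets delta_sets_commute by metis
qed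

end
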